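(* Let $(\Omega,\sqsubseteq)$ be a poset and $\mathcal{A}:\Omega\to\wp(\Omega)$ satisfy awareness persistence (if $\omega'\sqsubseteq\omega$ then $\mathcal{A}(\omega)\subseteq\mathcal{A}(\omega')$) and awareness refinability (if $\nu\notin\mathcal{A}(\omega)$ then there is $\omega'\sqsubseteq\omega$ such that $\nu\notin\mathcal{A}(\omega'')$ for all $\omega''\sqsubseteq\omega'$). Then for any $E\in\mathcal{RO}(\Omega,\sqsubseteq)$, we have $\mathbf{A}(E)\in\mathcal{RO}(\Omega,\sqsubseteq)$, where $\omega\in\mathbf{A}(E)$ iff for all $\omega'\sqsubseteq\omega$ and all $\nu\in\mathcal{A}(\omega')$, $\max(E\cap\downarrow\nu)\cup\max(\neg E\cap\downarrow\nu)\subseteq\mathcal{A}(\omega')$.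
   Context: $\downarrow E=\{\omega\mid\omega\sqsubseteq\nu\text{ for some }\nu\in E\}$, $\downarrow\nu=\downarrow\{\nu\}$; $\rho(E)=\{\omega\mid\forall\omega'\sqsubseteq\omega\ \exists\omega''\sqsubseteq\omega'\colon\omega''\in\downarrow E\}$; $\mathcal{RO}(\Omega,\sqsubseteq)=\{E\subseteq\Omega\mid\rho(E)=E\}$ (the regular open sets); $\neg E=\{\omega\mid\forall\omega'\sqsubseteq\omega,\ \omega'\notin E\}$; $\max(E)=\{\omega\in E\mid\text{there is no }\nu\in E\text{ with }\omega\sqsubseteq\nu\text{ and }\nu\not\sqsubseteq\omega\}$. *)

theory Defs
  imports Main
begin

definition down :: "('w \<Rightarrow> 'w \<Rightarrow> bool) \<Rightarrow> 'w set \<Rightarrow> 'w set" where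
  "down le E = {w. \<exists>v\<in>E. le w v}"

definition rho :: "('w \<Rightarrow> 'w \<Rightarrow> bool) \<Rightarrow> 'w set \<Rightarrow> 'w set" where
  "rho le E = {w. \<forall>w'. le w' w \<longrightarrow> (\<exists>w''. le w'' w' \<and> w'' \<in> down le E)}"

definition RO :: "('w \<Rightarrow> 'w \<Rightarrow> bool) \<Rightarrow> 'w set set" where
  "RO le = {E. rho le E = E}"

definition neg :: "('w \<Rightarrow> 'w \<Rightarrow> bool) \<Rightarrow> 'w set \<Rightarrow> 'w set" where
  "neg le E = {w. \<forall>w'. le w' w \<longrightarrow> w' \<notin> E}"

definition maxs :: "('w \<Rightarrow> 'w \<Rightarrow> bool) \<Rightarrow> 'w set \<Rightarrow> 'w set" where
  "maxs le E = {w\<in>E. \<not> (\<exists>v\<in>E. le w v \<and> \<not> le v w)}"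

definition awareness_persistence :: "('w \<Rightarrow> 'w \<Rightarrow> bool) \<Rightarrow> ('w \<Rightarrow> 'w set) \<Rightarrow> bool" where
  "awareness_persistence le Aw \<longleftrightarrow> (\<forall>w w'. le w' w \<longrightarrow> Aw w \<subseteq> Aw w')"

definition awareness_refinability :: "('w \<Rightarrow> 'w \<Rightarrow> bool) \<Rightarrow> ('w \<Rightarrow> 'w set) \<Rightarrow> bool" where
  "awareness_refinability le Aw \<longleftrightarrow>
     (\<forall>v w. v \<notin> Aw w \<longrightarrow> (\<exists>w'. le w' w \<and> (\<forall>w''. le w'' w' \<longrightarrow> v \<notin> Aw w'')))"

definition aware_op :: "('w \<Rightarrow> 'w \<Rightarrow> bool) \<Rightarrow> ('w \<Rightarrow> 'w set) \<Rightarrow> 'w set \<Rightarrow> 'w set" where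
  "aware_op le Aw E = {w. \<forall>w'. le w' w \<longrightarrow> (\<forall>v\<in>Aw w'.
      maxs le (E \<inter> down le {v}) \<union> maxs le (neg le E \<inter> down le {v}) \<subseteq> Aw w')}"

end

theory Submission
  imports Defs
begin

text \<open>\<open>\<A>(E)\<close> is downward closed by construction, so it is regular open as soon as it contains
  every world all of whose refinements can be refined into \<open>\<A>(E)\<close>. Suppose \<open>w\<close> is such a world
  but \<open>w \<notin> \<A>(E)\<close>: then some \<open>w' \<sqsubseteq> w\<close>, \<open>v \<in> \<A>(w')\<close> and maximal \<open>u\<close> below \<open>v\<close> have
  \<open>u \<notin> \<A>(w')\<close>. Refinability yields \<open>w\<^sub>1 \<sqsubseteq> w'\<close> below which \<open>u\<close> is never in awareness, and
  some \<open>w\<^sub>2 \<sqsubseteq> w\<^sub>1\<close> lies in \<open>\<A>(E)\<close>. Persistence gives \<open>v \<in> \<A>(w\<^sub>2)\<close>, hence \<open>u \<in> \<A>(w\<^sub>2)\<close>,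
  a contradiction.\<close>

lemma down_eq_self_if_downward_closed:
  assumes "reflp le" and "\<And>x y. y \<in> S \<Longrightarrow> le x y \<Longrightarrow> x \<in> S"
  shows "down le S = S"
  using assms unfolding down_def reflp_def by blast

lemma RO_if_downward_closed_dense:
  assumes "reflp le"
    and closed: "\<And>x y. y \<in> S \<Longrightarrow> le x y \<Longrightarrow> x \<in> S"
    and dense: "\<And>w. \<forall>w'. le w' w \<longrightarrow> (\<exists>w''. le w'' w' \<and> w'' \<in> S) \<Longrightarrow> w \<in> S"
  shows "S \<in> RO le"
proof -
  have "rho le S = {w. \<forall>w'. le w' w \<longrightarrow> (\<exists>w''. le w'' w' \<and> w'' \<in> S)}"
    by (simp add: rho_def down_eq_self_if_downward_closed[OF assms(1,2)])
  also have "\<dots> = S"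
    using dense closed \<open>reflp le\<close> unfolding reflp_def by blast
  finally show ?thesis unfolding RO_def by blast
qed

lemma aware_op_downward_closed:
  assumes "transp le" and "y \<in> aware_op le Aw E" and "le x y"
  shows "x \<in> aware_op le Aw E"
  using assms unfolding aware_op_def transp_def by blast

lemma aware_op_dense:
  assumes "reflp le" and "transp le"
    and persistence: "awareness_persistence le Aw"
    and refinability: "awareness_refinability le Aw"
    and dense: "\<forall>w'. le w' w \<longrightarrow> (\<exists>w''. le w'' w' \<and> w'' \<in> aware_op le Aw E)"
  shows "w \<in> aware_op le Aw E"
proof (rule ccontr)
  assume "w \<notin> aware_op le Aw E"
  then obtain w' v u where "le w' w" and v: "v \<in> Aw w'"
    and u: "u \<in> maxs le (E \<inter> down le {v}) \<union> maxs le (neg le E \<inter> down le {v})"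
    and "u \<notin> Aw w'"
    unfolding aware_op_def by blast
  then obtain w1 where "le w1 w'" and unaware: "\<And>w''. le w'' w1 \<Longrightarrow> u \<notin> Aw w''"
    using refinability unfolding awareness_refinability_def by blast
  moreover have "le w1 w"
    using \<open>transp le\<close> \<open>le w1 w'\<close> \<open>le w' w\<close> by (rule transpD)
  then obtain w2 where "le w2 w1" and w2: "w2 \<in> aware_op le Aw E"
    using dense by blast
  moreover have "v \<in> Aw w2"
    using persistence v \<open>le w2 w1\<close> \<open>le w1 w'\<close> \<open>transp le\<close>
    unfolding awareness_persistence_def transp_def by blast
  then have "u \<in> Aw w2"
    using w2 u \<open>reflp le\<close> unfolding aware_op_def reflp_def by blast
  ultimately show False by blast
qed

theorem lemma3p4:
  fixes le :: "'w \<Rightarrow> 'w \<Rightarrow> bool" and Aw :: "'w \<Rightarrow> 'w set" and E :: "'w set"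
  assumes "class.order le (\<lambda>x y. le x y \<and> \<not> le y x)"
    and "awareness_persistence le Aw"
    and "awareness_refinability le Aw"
    and "E \<in> RO le"
  shows "aware_op le Aw E \<in> RO le"
proof -
  interpret order le "\<lambda>x y. le x y \<and> \<not> le y x" by (fact assms(1))
  have "reflp le" and "transp le"
    by (auto intro: reflpI transpI order_trans)
  from \<open>reflp le\<close> show ?thesis
  proof (rule RO_if_downward_closed_dense)
    show "x \<in> aware_op le Aw E" if "y \<in> aware_op le Aw E" and "le x y" for x y
      using \<open>transp le\<close> that by (rule aware_op_downward_closed)
    show "w \<in> aware_op le Aw E"
      if "\<forall>w'. le w' w \<longrightarrow> (\<exists>w''. le w'' w' \<and> w'' \<in> aware_op le Aw E)" for w
      using \<open>reflp le\<close> \<open>transp le\<close> assms(2,3) that by (rule aware_op_dense)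
  qed
qed

end
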